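(* For all integers $p\ge4$, $d\ge2$ and $n\ge2$, $$p\,n\,N_{d,n}<(d^{p-1}-d^{\lfloor p/2\rfloor})(d^{p-1}-1)^{n-1},$$ where $N_{d,n}=\binom{d+n}{n}-n-1$. *)

theory Defs
  imports Main
begin

definition N_dn :: "nat \<Rightarrow> nat \<Rightarrow> int" where
  "N_dn d n = int ((d + n) choose n) - int n - 1"

end

theory Submission
  imports Defs
begin

text \<open>Put \<open>D = d^(p-1)\<close> and \<open>E = d^(p-2)\<close>, so \<open>D = d E\<close>. Since \<open>p \<le> 2^(p-2) \<le> E\<close>,
  \<open>d^\<lfloor>p/2\<rfloor> \<le> E\<close> and \<open>d + 4 < D - 1\<close>, the case \<open>n = 2\<close> follows from
  \<open>2 p N_{d,2} = p (d+4)(d-1) < E (D-1)(d-1) = (D - E)(D - 1)\<close>.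
  For the induction step, \<open>(n+1) C(d+n+1,n+1) = (d+n+1) C(d+n,n)\<close> and \<open>C(d+n,n) \<ge> C(n+2,2)\<close>
  show that \<open>n N_{d,n}\<close> grows at most by the factor \<open>D - 1\<close> when \<open>n\<close> increases,
  which is exactly the growth of the right-hand side.\<close>

lemma geometric_growth_bound:
  fixes f :: "nat \<Rightarrow> 'a::linordered_idom"
  assumes "\<And>k. k \<ge> m \<Longrightarrow> f (Suc k) \<le> b * f k"
    and "b > 0" and "f m < c" and "n \<ge> m"
  shows "f n < c * b ^ (n - m)"
  using \<open>n \<ge> m\<close>
proof (induction n rule: dec_induct)
  case base
  then show ?case using \<open>f m < c\<close> by simp
next
  case (step k)
  have "f (Suc k) \<le> b * f k" using step.hyps(1) by (rule assms(1))
  also have "\<dots> < b * (c * b ^ (k - m))" using step.IH \<open>b > 0\<close> by simp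
  also have "\<dots> = c * b ^ (Suc k - m)" using step.hyps by (simp add: Suc_diff_le)
  finally show ?case .
qed

lemma le_two_power_diff_two: "p \<ge> 4 \<Longrightarrow> p \<le> 2 ^ (p - 2)"
proof (induction p rule: nat_induct_at_least)
  case base
  then show ?case by simp
next
  case (Suc m)
  then have "Suc m - 2 = Suc (m - 2)" by simp
  with Suc show ?case by simp
qed

lemma add_six_le_power:
  fixes d :: "'a::linordered_idom"
  assumes "d \<ge> 2" and "q \<ge> 3"
  shows "d + 6 \<le> d ^ q"
proof -
  have "d + 6 \<le> d * 2 * 2" using assms(1) by simp
  also have "\<dots> \<le> d * d * d" using assms(1) by (intro mult_mono) auto
  also have "\<dots> = d ^ 3" by (simp add: power3_eq_cube)
  also have "\<dots> \<le> d ^ q" using assms by (intro power_increasing) auto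
  finally show ?thesis .
qed

lemma choose_add_two_lower:
  assumes "d \<ge> 2"
  shows "(n + 1) * (n + 2) \<le> 2 * ((d + n) choose n)"
proof -
  have "(n + 1) * (n + 2) = 2 * ((n + 2) choose 2)"
    by (simp add: choose_two)
  also have "(n + 2) choose 2 = (n + 2) choose n"
    using binomial_symmetric[of n "n + 2"] by simp
  also have "\<dots> \<le> (d + n) choose n"
    using assms by (intro binomial_right_mono) simp
  finally show ?thesis by simp
qed

lemma N_dn_two: "2 * N_dn d 2 = (int d + 4) * (int d - 1)"
proof -
  have choose_nat: "2 * ((d + 2) choose 2) = (d + 2) * (d + 1)"
    by (simp add: choose_two)
  have "2 * int ((d + 2) choose 2) = (int d + 2) * (int d + 1)"
    using arg_cong[OF choose_nat, of int] by (simp only: of_nat_add of_nat_mult of_nat_numeral of_nat_1)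
  then show ?thesis
    unfolding N_dn_def by (simp add: algebra_simps)
qed

lemma N_dn_Suc_le:
  fixes b :: int
  assumes "d \<ge> 2" and "n \<ge> 2" and b: "b \<ge> int d + 3"
  shows "int (Suc n) * N_dn d (Suc n) \<le> b * (int n * N_dn d n)"
proof -
  define C where "C = int ((d + n) choose n)"
  define C' where "C' = int ((d + Suc n) choose Suc n)"
  define e where "e = b * int n - int d - int n - 1"
  \<comment> \<open>\<open>b n N_{d,n} - (n+1) N_{d,n+1} = e C - b n (n+1) + (n+1)(n+2)\<close>, and \<open>e C \<ge> b n (n+1)\<close>
     because \<open>2 e \<ge> b n\<close> and \<open>2 C \<ge> (n+1)(n+2) \<ge> 4 (n+1)\<close>.\<close>
  have rec_nat: "(n + 1) * ((d + Suc n) choose Suc n) = (d + n + 1) * ((d + n) choose n)"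
    using Suc_times_binomial[of n "d + n"] by simp
  have rec: "(int n + 1) * C' = (int d + int n + 1) * C"
    using arg_cong[OF rec_nat, of int] unfolding C_def C'_def
    by (simp only: of_nat_add of_nat_mult of_nat_1)
  have "int ((n + 1) * (n + 2)) \<le> int (2 * ((d + n) choose n))"
    using choose_add_two_lower[OF assms(1)] by (simp only: of_nat_le_iff)
  then have low: "(int n + 1) * (int n + 2) \<le> 2 * C"
    unfolding C_def by (simp only: of_nat_add of_nat_mult of_nat_numeral of_nat_1)
  have "(b - 2) * 2 \<le> (b - 2) * int n"
    using assms by (intro mult_left_mono) auto
  then have two_e: "b * int n \<le> 2 * e"
    unfolding e_def using b by (simp add: algebra_simps)
  have "0 \<le> b * int n"
    using b by simp
  have "b * int n * (int n + 1) * 4 \<le> b * int n * (int n + 1) * (int n + 2)"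
    using assms by (intro mult_left_mono) auto
  also have "\<dots> = (b * int n) * ((int n + 1) * (int n + 2))"
    by (simp only: mult.assoc)
  also have "\<dots> \<le> (2 * e) * (2 * C)"
    using two_e \<open>0 \<le> b * int n\<close> by (intro mult_mono[OF two_e low]) auto
  finally have eC: "b * int n * (int n + 1) \<le> e * C"
    by simp
  have N': "N_dn d (Suc n) = C' - int n - 2"
    unfolding N_dn_def C'_def by simp
  have "int (Suc n) * N_dn d (Suc n) = (int d + int n + 1) * C - (int n + 1) * (int n + 2)"
    unfolding N' rec[symmetric] by (simp add: algebra_simps)
  moreover have "b * (int n * N_dn d n) = e * C + (int d + int n + 1) * C - b * int n * (int n + 1)"
    unfolding N_dn_def C_def e_def by (simp add: algebra_simps)
  moreover have "0 \<le> (int n + 1) * (int n + 2)"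
    by simp
  ultimately show ?thesis
    using eC by linarith
qed

lemma N_dn_two_bound:
  fixes p d :: nat
  assumes "p \<ge> 4" and "d \<ge> 2"
  shows "int p * 2 * N_dn d 2 < (int d ^ (p - 1) - int d ^ (p div 2)) * (int d ^ (p - 1) - 1)"
proof -
  define E where "E = int d ^ (p - 2)"
  have "p - 1 = Suc (p - 2)"
    using assms(1) by simp
  then have D: "int d ^ (p - 1) = int d * E"
    unfolding E_def by simp
  have "p \<le> 2 ^ (p - 2)" using assms(1) by (rule le_two_power_diff_two)
  also have "(2::nat) ^ (p - 2) \<le> d ^ (p - 2)" using assms(2) by (intro power_mono) auto
  finally have pE: "int p \<le> E"
    unfolding E_def by (simp only: of_nat_power[symmetric] of_nat_le_iff)
  have halfE: "int d ^ (p div 2) \<le> E"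
    unfolding E_def using assms by (intro power_increasing) auto
  have "int d + 6 \<le> int d ^ (p - 1)"
    using assms by (intro add_six_le_power) auto
  then have "int d + 4 < int d * E - 1" unfolding D by simp
  have "int p * 2 * N_dn d 2 = int p * ((int d + 4) * (int d - 1))"
    using N_dn_two by simp
  also have "\<dots> \<le> E * ((int d + 4) * (int d - 1))"
    using pE assms(2) by (intro mult_right_mono) auto
  also have "\<dots> < E * ((int d * E - 1) * (int d - 1))"
    using pE assms \<open>int d + 4 < int d * E - 1\<close> by (intro mult_strict_left_mono mult_strict_right_mono) auto
  also have "\<dots> = (int d * E - E) * (int d * E - 1)"
    by (simp add: algebra_simps)
  also have "\<dots> \<le> (int d * E - int d ^ (p div 2)) * (int d * E - 1)"
    using halfE \<open>int d + 4 < int d * E - 1\<close> by (intro mult_right_mono) auto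
  finally show ?thesis unfolding D .
qed

theorem lemma5p5:
  fixes p d n :: nat
  assumes "p \<ge> 4" and "d \<ge> 2" and "n \<ge> 2"
  shows "int p * int n * N_dn d n
         < (int d ^ (p - 1) - int d ^ (p div 2)) * (int d ^ (p - 1) - 1) ^ (n - 1)"
proof -
  define D where "D = int d ^ (p - 1)"
  have "int d + 6 \<le> D"
    unfolding D_def using assms by (intro add_six_le_power) auto
  then have "int d + 3 \<le> D - 1" by simp
  let ?f = "\<lambda>k. int p * int k * N_dn d k"
  have "?f (Suc k) \<le> (D - 1) * ?f k" if "k \<ge> 2" for k
  proof -
    have "?f (Suc k) = int p * (int (Suc k) * N_dn d (Suc k))" by (simp only: mult.assoc)
    also have "\<dots> \<le> int p * ((D - 1) * (int k * N_dn d k))"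
      using N_dn_Suc_le[OF assms(2) that \<open>int d + 3 \<le> D - 1\<close>] by (intro mult_left_mono) auto
    also have "\<dots> = (D - 1) * ?f k" by (simp only: ac_simps)
    finally show ?thesis .
  qed
  then have "?f n < ((D - int d ^ (p div 2)) * (D - 1)) * (D - 1) ^ (n - 2)"
    using N_dn_two_bound[OF assms(1,2)] \<open>int d + 3 \<le> D - 1\<close> assms(3)
    by (intro geometric_growth_bound) (auto simp: D_def)
  also have "\<dots> = (D - int d ^ (p div 2)) * (D - 1) ^ (n - 1)"
  proof -
    have "n - 1 = Suc (n - 2)"
      using assms(3) by simp
    then show ?thesis
      by (simp only: power_Suc ac_simps)
  qed
  finally show ?thesis unfolding D_def .
qed

end
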